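(* For any suitable parameters $(m,q,d,\tau)$, the shifted projection protocol $\Pi$ is perfectly safe: for every run $\rho$ of $\Pi$, every card $c\in\Omega$ and every agent $P$, $\Pr(c\in H_P\mid\rho)=\tau_P/|\tau|$.
   Context: Agents $\mathcal A=\{A,B_1,\dots,B_m\}$ speak in order $A,B_1,\dots,B_m$. A distribution type is a vector $\tau=(\tau_P)_{P\in\mathcal A}$ of positive integers, $|\tau|=\sum_P\tau_P$; the deck $\Omega$ has $|\tau|$ cards; a deal of type $\tau$ is a partition $H=(H_P)_P$ of $\Omega$ with $|H_P|=\tau_P$. Suitable parameters: $m>1$, $q>m$ a prime power, $d>0$, $|\tau|=q^{d+1}$, $\tau_A=q^{d+1}-q^d$, $\tau_{B_k}>q^{d-1}$ for each $k\in[1,m]$. A transversal hyperplane $V\subseteq\mathbb F_q^{d+1}$ is $\{x: x_{d+1}=a_1x_1+\dots+a_dx_d+b\}$; $\sigma(V)=(a_1,\dots,a_d)$; $\pi$ projects $\mathbb F_q^{d+1}$ onto the first $d$ coordinates; $\pi^V_\downarrow(w)=\pi(w)+\sigma(V)$ for $w\in V$. Shifted projection protocol (tokens: maps $\Omega\to\mathbb F_q^{d+1}$ and subsets of $\mathbb F_q^d$; runs are finite token sequences, $\rho*a$ appends $a$): maximal executions for deal $H$ are $(H,f,X_1,\dots,X_m)$ with $f:\Omega\to\mathbb F_q^{d+1}$ a bijection such that $V=\mathbb F_q^{d+1}\setminus f[H_A]$ is a transversal hyperplane and $X_k=\pi^V_\downarrow[f[H_{B_k}]]$; $\Pi(H,\rho)$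 is the set of tokens $a$ with $(H,\rho*a)$ an initial segment of a maximal execution; an execution is $(H,a_0,\dots,a_n)$ with $a_k\in\Pi(H,a_0,\dots,a_{k-1})$ for all $k$; $\rho$ is a run of $\Pi$ if some $(H,\rho)$ is an execution. Probability model: a deal $H$ is drawn uniformly at random among deals of type $\tau$; then, starting from the empty run, while $\Pi(H,\rho)\neq\emptyset$ for the current run $\rho$, a token is drawn uniformly at random from $\Pi(H,\rho)$ and appended. The event "$\rho$" means the first $|\rho|$ tokens produced are exactly $\rho$. *)

theory Defs
  imports Complex_Main "HOL-Library.Sublist" "HOL-Library.Cardinality"
begin

text \<open>Agents are numbered 0..m: agent 0 is A, agent k (1 \<le> k \<le> m) is B_k.
  A distribution type is tau :: nat => nat (only the values on {0..m} matter).
  Vectors of F_q^n are functions nat => 'f vanishing from index n on;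
  coordinate x_{i+1} of the paper is x i.\<close>

definition vecs :: "nat \<Rightarrow> (nat \<Rightarrow> 'f::zero) set" where
  "vecs n = {x. \<forall>i\<ge>n. x i = 0}"

definition total :: "nat \<Rightarrow> (nat \<Rightarrow> nat) \<Rightarrow> nat" where
  "total m tau = (\<Sum>P\<le>m. tau P)"

definition deck :: "nat \<Rightarrow> (nat \<Rightarrow> nat) \<Rightarrow> nat set" where
  "deck m tau = {..<total m tau}"

definition is_deal :: "nat \<Rightarrow> (nat \<Rightarrow> nat) \<Rightarrow> (nat \<Rightarrow> nat set) \<Rightarrow> bool" where
  "is_deal m tau H \<longleftrightarrow>
     (\<forall>P\<le>m. H P \<subseteq> deck m tau \<and> card (H P) = tau P) \<and>
     (\<forall>P\<le>m. \<forall>Q\<le>m. P \<noteq> Q \<longrightarrow> H P \<inter> H Q = {}) \<and>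
     (\<Union>P\<le>m. H P) = deck m tau \<and>
     (\<forall>P>m. H P = {})"

definition deals :: "nat \<Rightarrow> (nat \<Rightarrow> nat) \<Rightarrow> (nat \<Rightarrow> nat set) set" where
  "deals m tau = {H. is_deal m tau H}"

definition hyperplane :: "nat \<Rightarrow> (nat \<Rightarrow> 'f::field) \<Rightarrow> 'f \<Rightarrow> (nat \<Rightarrow> 'f) set" where
  "hyperplane d a b = {x \<in> vecs (Suc d). x d = (\<Sum>i<d. a i * x i) + b}"

definition transversal_hyperplane :: "nat \<Rightarrow> (nat \<Rightarrow> 'f::field) set \<Rightarrow> bool" where
  "transversal_hyperplane d V \<longleftrightarrow> (\<exists>a\<in>vecs d. \<exists>b. V = hyperplane d a b)"

definition sigma :: "nat \<Rightarrow> (nat \<Rightarrow> 'f::field) set \<Rightarrow> nat \<Rightarrow> 'f" where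
  "sigma d V = (THE a. a \<in> vecs d \<and> (\<exists>b. V = hyperplane d a b))"

definition proj :: "nat \<Rightarrow> (nat \<Rightarrow> 'f::zero) \<Rightarrow> nat \<Rightarrow> 'f" where
  "proj d w = (\<lambda>i. if i < d then w i else 0)"

definition proj_down :: "nat \<Rightarrow> (nat \<Rightarrow> 'f::field) set \<Rightarrow> (nat \<Rightarrow> 'f) \<Rightarrow> nat \<Rightarrow> 'f" where
  "proj_down d V w = (\<lambda>i. proj d w i + sigma d V i)"

text \<open>Tokens: maps from the deck to F_q^{d+1} (represented extensionally,
  i.e. constant 0 outside the deck) and subsets of F_q^d.\<close>
datatype 'f token = TMap "nat \<Rightarrow> nat \<Rightarrow> 'f" | TSet "(nat \<Rightarrow> 'f) set"

definition max_execs :: "nat \<Rightarrow> nat \<Rightarrow> (nat \<Rightarrow> nat) \<Rightarrow> (nat \<Rightarrow> nat set) \<Rightarrow> 'f::field token list set" where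
  "max_execs d m tau H =
     {TMap f # map (\<lambda>k. TSet (proj_down d (vecs (Suc d) - f ` H 0) ` (f ` H k))) [1..<Suc m] | f.
        bij_betw f (deck m tau) (vecs (Suc d)) \<and>
        (\<forall>c. c \<notin> deck m tau \<longrightarrow> f c = (\<lambda>_. 0)) \<and>
        transversal_hyperplane d (vecs (Suc d) - f ` H 0)}"

definition Pi_prot :: "nat \<Rightarrow> nat \<Rightarrow> (nat \<Rightarrow> nat) \<Rightarrow> (nat \<Rightarrow> nat set) \<Rightarrow> 'f::field token list \<Rightarrow> 'f token set" where
  "Pi_prot d m tau H \<rho> = {a. \<exists>e\<in>max_execs d m tau H. prefix (\<rho> @ [a]) e}"

definition is_execution :: "nat \<Rightarrow> nat \<Rightarrow> (nat \<Rightarrow> nat) \<Rightarrow> (nat \<Rightarrow> nat set) \<Rightarrow> 'f::field token list \<Rightarrow> bool" where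
  "is_execution d m tau H \<rho> \<longleftrightarrow>
     is_deal m tau H \<and> (\<forall>k<length \<rho>. \<rho> ! k \<in> Pi_prot d m tau H (take k \<rho>))"

definition is_run :: "nat \<Rightarrow> nat \<Rightarrow> (nat \<Rightarrow> nat) \<Rightarrow> 'f::field token list \<Rightarrow> bool" where
  "is_run d m tau \<rho> \<longleftrightarrow> (\<exists>H. is_execution d m tau H \<rho>)"

text \<open>Probability, given deal H, that the first |rho| tokens produced are exactly rho
  (each token drawn uniformly from Pi(H, current run), stopping when Pi is empty).\<close>
definition run_prob :: "nat \<Rightarrow> nat \<Rightarrow> (nat \<Rightarrow> nat) \<Rightarrow> (nat \<Rightarrow> nat set) \<Rightarrow> 'f::field token list \<Rightarrow> real" where
  "run_prob d m tau H \<rho> =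
     (\<Prod>k<length \<rho>. if \<rho> ! k \<in> Pi_prot d m tau H (take k \<rho>)
                      then 1 / real (card (Pi_prot d m tau H (take k \<rho>))) else 0)"

text \<open>Pr(E(H) and rho), with H uniform over deals of type tau.\<close>
definition prob_event :: "nat \<Rightarrow> nat \<Rightarrow> (nat \<Rightarrow> nat) \<Rightarrow> ((nat \<Rightarrow> nat set) \<Rightarrow> bool) \<Rightarrow> 'f::field token list \<Rightarrow> real" where
  "prob_event d m tau E \<rho> =
     (\<Sum>H\<in>deals m tau. if E H then run_prob d m tau H \<rho> else 0) / real (card (deals m tau))"

definition cond_prob :: "nat \<Rightarrow> nat \<Rightarrow> (nat \<Rightarrow> nat) \<Rightarrow> ((nat \<Rightarrow> nat set) \<Rightarrow> bool) \<Rightarrow> 'f::field token list \<Rightarrow> real" where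
  "cond_prob d m tau E \<rho> = prob_event d m tau E \<rho> / prob_event d m tau (\<lambda>_. True) \<rho>"

end

theory Submission
  imports Defs "HOL-Combinatorics.Transposition"
begin

text \<open>For the empty run all cards play the same role. Otherwise the run starts with the
  bijection \<open>f\<close> announced by \<open>A\<close>. The shears
  \<open>(x', x\<^sub>d\<^sub>+\<^sub>1) \<mapsto> (x' - u, x\<^sub>d\<^sub>+\<^sub>1 + u\<cdot>x' + s)\<close> of \<open>F\<^sub>q\<^sup>d\<^sup>+\<^sup>1\<close> permute the transversal
  hyperplanes, commute with the shifted projections, and act transitively on points.
  Conjugating a shear by \<open>f\<close> therefore gives a permutation of the deck that moves any given
  card to any other one and leaves the probability of the run unchanged for every deal.
  Averaging over such permutations, the weight of the deals with \<open>c \<in> H\<^sub>P\<close> does not depend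
  on \<open>c\<close>, and summing over all cards gives \<open>\<tau>\<^sub>P / |\<tau>|\<close>.\<close>

section \<open>Permutations of the deck\<close>

lemma hand_subset_deck: "is_deal m tau H \<Longrightarrow> H P \<subseteq> deck m tau"
  unfolding is_deal_def by (cases "P \<le> m") auto

lemma finite_deals: "finite (deals m tau)"
proof (rule finite_subset)
  show "deals m tau \<subseteq> {H. \<forall>P. (P \<in> {..m} \<longrightarrow> H P \<in> Pow (deck m tau)) \<and> (P \<notin> {..m} \<longrightarrow> H P = {})}"
    unfolding deals_def by (auto simp: hand_subset_deck) (auto simp: is_deal_def)
  show "finite \<dots>"
    by (rule finite_set_of_finite_funs) (auto simp: deck_def)
qed

definition permute_deal :: "(nat \<Rightarrow> nat) \<Rightarrow> (nat \<Rightarrow> nat set) \<Rightarrow> nat \<Rightarrow> nat set" where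
  "permute_deal g H = (\<lambda>P. g ` H P)"

lemma is_deal_permute_deal:
  assumes g: "bij_betw g (deck m tau) (deck m tau)" and H: "is_deal m tau H"
  shows "is_deal m tau (permute_deal g H)"
proof -
  have inj: "inj_on g (deck m tau)" using g by (rule bij_betw_imp_inj_on)
  have sub: "H P \<subseteq> deck m tau" for P using H by (rule hand_subset_deck)
  have "card (g ` H P) = card (H P)" for P
    using inj sub[of P] by (meson card_image inj_on_subset)
  moreover have "g ` H P \<inter> g ` H Q = g ` (H P \<inter> H Q)" for P Q
    using inj sub[of P] sub[of Q] by (simp add: inj_on_image_Int)
  moreover have "(\<Union>P\<le>m. g ` H P) = g ` (\<Union>P\<le>m. H P)" by auto
  moreover have "g ` H P \<subseteq> deck m tau" for P
    using sub[of P] g by (auto dest: bij_betwE)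
  ultimately show ?thesis
    using H g unfolding is_deal_def permute_deal_def bij_betw_def by auto
qed

lemma permute_deal_inv_into:
  assumes g: "bij_betw g D D" and H: "\<And>P. H P \<subseteq> D"
  shows "permute_deal (inv_into D g) (permute_deal g H) = H"
    and "permute_deal g (permute_deal (inv_into D g) H) = H"
proof -
  have "inv_into D g ` g ` H P = H P" and "g ` inv_into D g ` H P = H P" for P
    using g H[of P] by (auto simp: bij_betw_def image_inv_into_cancel inv_into_image_cancel)
  then show "permute_deal (inv_into D g) (permute_deal g H) = H"
    and "permute_deal g (permute_deal (inv_into D g) H) = H"
    unfolding permute_deal_def by auto
qed

lemma bij_betw_permute_deal:
  assumes g: "bij_betw g (deck m tau) (deck m tau)"
  shows "bij_betw (permute_deal g) (deals m tau) (deals m tau)"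
proof (rule bij_betw_byWitness[where f'="permute_deal (inv_into (deck m tau) g)"])
  have g': "bij_betw (inv_into (deck m tau) g) (deck m tau) (deck m tau)"
    using g by (rule bij_betw_inv_into)
  show "\<forall>H\<in>deals m tau. permute_deal (inv_into (deck m tau) g) (permute_deal g H) = H"
    and "\<forall>H\<in>deals m tau. permute_deal g (permute_deal (inv_into (deck m tau) g) H) = H"
    using permute_deal_inv_into[OF g] hand_subset_deck unfolding deals_def by auto
  show "permute_deal g ` deals m tau \<subseteq> deals m tau"
    and "permute_deal (inv_into (deck m tau) g) ` deals m tau \<subseteq> deals m tau"
    using is_deal_permute_deal[OF g] is_deal_permute_deal[OF g'] unfolding deals_def by auto
qed

lemma weighted_hand_count:
  fixes W :: "(nat \<Rightarrow> nat set) \<Rightarrow> real"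
  assumes transitive: "\<And>c'. c' \<in> deck m tau \<Longrightarrow> \<exists>g. bij_betw g (deck m tau) (deck m tau) \<and>
             g c = c' \<and> (\<forall>H\<in>deals m tau. W (permute_deal g H) = W H)"
    and c: "c \<in> deck m tau" and P: "P \<le> m"
  shows "(\<Sum>H\<in>deals m tau. if c \<in> H P then W H else 0) * real (total m tau)
       = real (tau P) * (\<Sum>H\<in>deals m tau. W H)"
proof -
  define N where "N x = (\<Sum>H\<in>deals m tau. if x \<in> H P then W H else 0)" for x
  have N_const: "N c' = N c" if c': "c' \<in> deck m tau" for c'
  proof -
    obtain g where g: "bij_betw g (deck m tau) (deck m tau)" and gc: "g c = c'"
      and W: "\<forall>H\<in>deals m tau. W (permute_deal g H) = W H" using transitive[OF c'] by blast
    have "c' \<in> permute_deal g H P \<longleftrightarrow> c \<in> H P" if "H \<in> deals m tau" for H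
    proof -
      have "H P \<subseteq> deck m tau" using that hand_subset_deck unfolding deals_def by blast
      then show ?thesis unfolding permute_deal_def gc[symmetric]
        using g c by (meson bij_betw_imp_inj_on inj_on_image_mem_iff)
    qed
    then have "N c' = (\<Sum>H\<in>deals m tau. if c \<in> H P then W H else 0)"
      unfolding N_def using W
      by (subst sum.reindex_bij_betw[OF bij_betw_permute_deal[OF g], symmetric])
         (auto intro!: sum.cong)
    then show ?thesis unfolding N_def .
  qed
  have hand_size: "(\<Sum>x\<in>deck m tau. if x \<in> H P then W H else 0) = real (tau P) * W H"
    if "H \<in> deals m tau" for H
  proof -
    have "deck m tau \<inter> H P = H P" and "card (H P) = tau P"
      using that hand_subset_deck[of m tau H P] P unfolding deals_def is_deal_def by auto
    then show ?thesis
      by (simp add: sum.inter_restrict[symmetric] deck_def)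
  qed
  have "real (total m tau) * N c = (\<Sum>x\<in>deck m tau. N x)"
    using N_const by (simp add: deck_def)
  also have "\<dots> = (\<Sum>H\<in>deals m tau. \<Sum>x\<in>deck m tau. if x \<in> H P then W H else 0)"
    unfolding N_def by (rule sum.swap)
  also have "\<dots> = real (tau P) * (\<Sum>H\<in>deals m tau. W H)"
    by (simp add: hand_size sum_distrib_left)
  finally show ?thesis unfolding N_def by (simp add: mult.commute)
qed

section \<open>Shears of \<open>F\<^sub>q\<^sup>d\<^sup>+\<^sup>1\<close>\<close>

definition dot :: "nat \<Rightarrow> (nat \<Rightarrow> 'f::field) \<Rightarrow> (nat \<Rightarrow> 'f) \<Rightarrow> 'f" where
  "dot d a x = (\<Sum>i<d. a i * x i)"

definition shear :: "nat \<Rightarrow> (nat \<Rightarrow> 'f::field) \<Rightarrow> 'f \<Rightarrow> (nat \<Rightarrow> 'f) \<Rightarrow> nat \<Rightarrow> 'f" where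
  "shear d u s w = (\<lambda>i. if i < d then w i - u i else if i = d then w d + dot d u w + s else 0)"

lemma hyperplane_dot: "hyperplane d a b = {x \<in> vecs (Suc d). x d = dot d a x + b}"
  unfolding hyperplane_def dot_def by simp

lemma dot_add_left: "dot d (\<lambda>i. a i + u i) x = dot d a x + dot d u x"
  unfolding dot_def by (simp add: distrib_right sum.distrib)

lemma dot_uminus_left: "dot d (\<lambda>i. - a i) x = - dot d a x"
  unfolding dot_def by (simp add: sum_negf)

lemma dot_uminus_right: "dot d a (\<lambda>i. - x i) = - dot d a x"
  unfolding dot_def by (simp add: sum_negf)

lemma dot_shear: "dot d a (shear d u s w) = dot d a w - dot d a u"
  unfolding dot_def shear_def by (simp add: right_diff_distrib sum_subtractf)

lemma shear_vecs: "w \<in> vecs (Suc d) \<Longrightarrow> shear d u s w \<in> vecs (Suc d)"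
  unfolding vecs_def shear_def by auto

lemma shear_inverse:
  assumes "w \<in> vecs (Suc d)"
  shows "shear d (\<lambda>i. - u i) (- s - dot d u u) (shear d u s w) = w"
proof
  fix i
  have "dot d (\<lambda>i. - u i) (shear d u s w) = - dot d u w + dot d u u"
    by (simp add: dot_shear dot_uminus_left)
  moreover have "shear d u s w i = (if i < d then w i - u i else if i = d then w d + dot d u w + s else 0)"
    for i by (simp add: shear_def)
  ultimately show "shear d (\<lambda>i. - u i) (- s - dot d u u) (shear d u s w) i = w i"
    using assms unfolding vecs_def by (simp add: shear_def[of d "\<lambda>i. - u i"])
qed

lemma shear_inverse':
  assumes "w \<in> vecs (Suc d)"
  shows "shear d u s (shear d (\<lambda>i. - u i) (- s - dot d u u) w) = w"
  using shear_inverse[OF assms, of "\<lambda>i. - u i" "- s - dot d u u"]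
  by (simp add: dot_uminus_left dot_uminus_right)

lemma bij_betw_shear: "bij_betw (shear d u s) (vecs (Suc d)) (vecs (Suc d))"
  by (rule bij_betw_byWitness[where f'="shear d (\<lambda>i. - u i) (- s - dot d u u)"])
     (auto simp: shear_inverse shear_inverse' shear_vecs)

lemma hyperplane_subset_vecs: "hyperplane d a b \<subseteq> vecs (Suc d)"
  unfolding hyperplane_def by blast

lemma shear_mem_hyperplane_iff:
  assumes "w \<in> vecs (Suc d)"
  shows "shear d u s w \<in> hyperplane d (\<lambda>i. a i + u i) (dot d (\<lambda>i. a i + u i) u + b + s)
     \<longleftrightarrow> w \<in> hyperplane d a b"
proof -
  have "shear d u s w d = w d + dot d u w + s" by (simp add: shear_def)
  moreover have "dot d (\<lambda>i. a i + u i) (shear d u s w) = dot d a w + dot d u w - dot d (\<lambda>i. a i + u i) u"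
    by (simp add: dot_shear dot_add_left)
  ultimately show ?thesis
    using assms shear_vecs[OF assms] unfolding hyperplane_dot
    by (auto simp: algebra_simps)
qed

lemma shear_image_hyperplane:
  "shear d u s ` hyperplane d a b = hyperplane d (\<lambda>i. a i + u i) (dot d (\<lambda>i. a i + u i) u + b + s)"
  (is "_ = ?H")
proof
  show "shear d u s ` hyperplane d a b \<subseteq> ?H"
    using shear_mem_hyperplane_iff hyperplane_subset_vecs by blast
  show "?H \<subseteq> shear d u s ` hyperplane d a b"
  proof
    fix z assume z: "z \<in> ?H"
    then have zv: "z \<in> vecs (Suc d)" using hyperplane_subset_vecs by blast
    let ?w = "shear d (\<lambda>i. - u i) (- s - dot d u u) z"
    have w_vec: "?w \<in> vecs (Suc d)" using zv by (rule shear_vecs)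
    have "shear d u s ?w = z" using zv by (rule shear_inverse')
    moreover have "?w \<in> hyperplane d a b"
      using z shear_mem_hyperplane_iff[OF w_vec, of u s a b] calculation by simp
    ultimately show "z \<in> shear d u s ` hyperplane d a b" by (metis image_eqI)
  qed
qed

lemma hyperplane_slope_unique:
  fixes a a' :: "nat \<Rightarrow> 'f::field"
  assumes a: "a \<in> vecs d" and a': "a' \<in> vecs d"
    and eq: "hyperplane d a b = hyperplane d a' b'"
  shows "a = a'"
proof -
  define z0 where "z0 = (\<lambda>i. if i = d then b else (0::'f))"
  have "z0 \<in> hyperplane d a b"
    unfolding hyperplane_dot z0_def vecs_def dot_def by simp
  then have bb: "b = b'" using eq unfolding hyperplane_dot z0_def dot_def by simp
  show ?thesis
  proof
    fix j
    show "a j = a' j"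
    proof (cases "j < d")
      case False then show ?thesis using a a' unfolding vecs_def by auto
    next
      case True
      define e where "e = (\<lambda>i. if i = j then 1 else if i = d then a j + b else (0::'f))"
      have dot_e: "dot d c e = c j" for c
        unfolding dot_def e_def using True by (simp add: if_distrib sum.If_cases)
      have e_last: "e d = a j + b" using True by (simp add: e_def)
      have "e \<in> hyperplane d a b"
        unfolding hyperplane_dot using dot_e True by (auto simp: e_def vecs_def)
      then have "e \<in> hyperplane d a' b'" using eq by simp
      then have "a j + b = a' j + b'" unfolding hyperplane_dot using e_last dot_e[of a'] by simp
      then show ?thesis using bb by simp
    qed
  qed
qed

lemma sigma_hyperplane: "(a :: nat \<Rightarrow> 'f::field) \<in> vecs d \<Longrightarrow> sigma d (hyperplane d a b) = a"
  unfolding sigma_def by (rule the_equality) (auto dest: hyperplane_slope_unique)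

lemma add_vecs: "(a :: nat \<Rightarrow> 'a::monoid_add) \<in> vecs d \<Longrightarrow> u \<in> vecs d \<Longrightarrow> (\<lambda>i. a i + u i) \<in> vecs d"
  unfolding vecs_def by auto

lemma transversal_shear_image:
  assumes "u \<in> vecs d" and "transversal_hyperplane d V"
  shows "transversal_hyperplane d (shear d u s ` V)"
proof -
  obtain a b where a: "a \<in> vecs d" and "V = hyperplane d a b"
    using assms(2) unfolding transversal_hyperplane_def by blast
  then have "shear d u s ` V = hyperplane d (\<lambda>i. a i + u i) (dot d (\<lambda>i. a i + u i) u + b + s)"
    by (simp add: shear_image_hyperplane)
  then show ?thesis
    unfolding transversal_hyperplane_def using add_vecs[OF a assms(1)] by blast
qed

lemma transversal_shear_image_iff:
  assumes u: "u \<in> vecs d" and V: "V \<subseteq> vecs (Suc d)"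
  shows "transversal_hyperplane d (shear d u s ` V) \<longleftrightarrow> transversal_hyperplane d V"
proof
  assume "transversal_hyperplane d V"
  then show "transversal_hyperplane d (shear d u s ` V)" by (rule transversal_shear_image[OF u])
next
  assume image: "transversal_hyperplane d (shear d u s ` V)"
  have "(\<lambda>i. - u i) \<in> vecs d" using u by (simp add: vecs_def)
  note transversal_shear_image[OF this image, of "- s - dot d u u"]
  moreover have "shear d (\<lambda>i. - u i) (- s - dot d u u) ` shear d u s ` V = V"
  proof -
    have "shear d (\<lambda>i. - u i) (- s - dot d u u) ` shear d u s ` V = id ` V"
      unfolding image_image using V by (intro image_cong) (auto simp: shear_inverse)
    then show ?thesis by simp
  qed
  ultimately show "transversal_hyperplane d V" by simp
qed

lemma proj_down_shear:
  assumes u: "u \<in> vecs d" and V: "transversal_hyperplane d V" and w: "w \<in> V"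
  shows "proj_down d (shear d u s ` V) (shear d u s w) = proj_down d V w"
proof -
  obtain a b where a: "a \<in> vecs d" and V_eq: "V = hyperplane d a b"
    using V unfolding transversal_hyperplane_def by auto
  have "sigma d (shear d u s ` V) = (\<lambda>i. a i + u i)"
    unfolding V_eq shear_image_hyperplane using a u by (simp add: sigma_hyperplane add_vecs)
  then show ?thesis
    using a u V_eq sigma_hyperplane[OF a]
    unfolding proj_down_def proj_def shear_def vecs_def by auto
qed

lemma shear_transitive:
  assumes "p \<in> vecs (Suc d)" "p' \<in> vecs (Suc d)"
  shows "\<exists>u\<in>vecs d. \<exists>s. shear d u s p = (p' :: nat \<Rightarrow> 'f::field)"
proof (intro bexI exI)
  let ?u = "\<lambda>i. if i < d then p i - p' i else 0"
  show "?u \<in> vecs d" by (simp add: vecs_def)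
  show "shear d ?u (p' d - p d - dot d ?u p) p = p'"
    using assms unfolding shear_def vecs_def by auto
qed

section \<open>Symmetry of the shifted projection protocol\<close>

lemma finite_vecs: "finite (vecs n :: (nat \<Rightarrow> 'f::{finite,zero}) set)"
proof (rule finite_subset)
  show "vecs n \<subseteq> {x :: nat \<Rightarrow> 'f. \<forall>i. (i \<in> {..<n} \<longrightarrow> x i \<in> UNIV) \<and> (i \<notin> {..<n} \<longrightarrow> x i = 0)}"
    unfolding vecs_def by auto
  show "finite \<dots>" by (rule finite_set_of_finite_funs) auto
qed

definition admissible_maps ::
  "nat \<Rightarrow> nat \<Rightarrow> (nat \<Rightarrow> nat) \<Rightarrow> (nat \<Rightarrow> nat set) \<Rightarrow> (nat \<Rightarrow> nat \<Rightarrow> 'f::field) set" where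
  "admissible_maps d m tau H = {f. bij_betw f (deck m tau) (vecs (Suc d)) \<and>
     (\<forall>c. c \<notin> deck m tau \<longrightarrow> f c = (\<lambda>_. 0)) \<and>
     transversal_hyperplane d (vecs (Suc d) - f ` H 0)}"

definition max_execution ::
  "nat \<Rightarrow> nat \<Rightarrow> (nat \<Rightarrow> nat set) \<Rightarrow> (nat \<Rightarrow> nat \<Rightarrow> 'f::field) \<Rightarrow> 'f token list" where
  "max_execution d m H f =
     TMap f # map (\<lambda>k. TSet (proj_down d (vecs (Suc d) - f ` H 0) ` f ` H k)) [1..<Suc m]"

lemma max_execs_eq_image: "max_execs d m tau H = max_execution d m H ` admissible_maps d m tau H"
  unfolding max_execs_def max_execution_def admissible_maps_def by auto

lemma finite_admissible_maps:
  "finite (admissible_maps d m tau H :: (nat \<Rightarrow> nat \<Rightarrow> 'f::{finite,field}) set)"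
proof (rule finite_subset)
  show "admissible_maps d m tau H \<subseteq> {f :: nat \<Rightarrow> nat \<Rightarrow> 'f. \<forall>c.
          (c \<in> deck m tau \<longrightarrow> f c \<in> vecs (Suc d)) \<and> (c \<notin> deck m tau \<longrightarrow> f c = (\<lambda>_. 0))}"
    unfolding admissible_maps_def by (auto dest: bij_betwE)
  show "finite \<dots>"
    by (rule finite_set_of_finite_funs) (auto simp: deck_def finite_vecs)
qed

lemma Pi_prot_Nil: "Pi_prot d m tau H [] = TMap ` admissible_maps d m tau H"
  unfolding Pi_prot_def max_execs_eq_image max_execution_def by auto

lemma Pi_prot_TMap: "Pi_prot d m tau H (TMap f # \<sigma>) =
   {a. f \<in> admissible_maps d m tau H \<and> prefix (TMap f # \<sigma> @ [a]) (max_execution d m H f)}"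
  unfolding Pi_prot_def max_execs_eq_image by (auto simp: max_execution_def)

lemma finite_Pi_prot: "finite (Pi_prot d m tau H \<sigma> :: 'f::{finite,field} token set)"
proof (rule finite_subset)
  show "Pi_prot d m tau H \<sigma> \<subseteq> (\<Union>e\<in>max_execs d m tau H. set e)"
    unfolding Pi_prot_def by (auto dest!: set_mono_prefix)
  show "finite (\<Union>e\<in>max_execs d m tau H. set (e :: 'f token list))"
    unfolding max_execs_eq_image by (simp add: finite_admissible_maps)
qed

lemma run_prob_pos:
  assumes "is_execution d m tau H (\<rho> :: 'f::{finite,field} token list)"
  shows "run_prob d m tau H \<rho> > 0"
  unfolding run_prob_def
proof (rule prod_pos)
  fix k assume "k \<in> {..<length \<rho>}"
  then have "\<rho> ! k \<in> Pi_prot d m tau H (take k \<rho>)"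
    using assms unfolding is_execution_def by auto
  moreover from this have "card (Pi_prot d m tau H (take k \<rho>)) > 0"
    using finite_Pi_prot card_gt_0_iff by blast
  ultimately show "0 < (if \<rho> ! k \<in> Pi_prot d m tau H (take k \<rho>)
                  then 1 / real (card (Pi_prot d m tau H (take k \<rho>))) else 0)"
    by simp
qed

lemma run_prob_nonneg: "run_prob d m tau H \<rho> \<ge> 0"
  unfolding run_prob_def by (intro prod_nonneg) auto

lemma run_prob_Cons_cong:
  fixes a :: "'f::field token"
  \<comment> \<open>Without the annotations each \<open>[]\<close> would get a token type of its own.\<close>
  assumes "card (Pi_prot d m tau H ([] :: 'f token list)) = card (Pi_prot d m tau H' ([] :: 'f token list))"
    and "a \<in> Pi_prot d m tau H [] \<longleftrightarrow> a \<in> Pi_prot d m tau H' []"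
    and "\<And>\<sigma>. Pi_prot d m tau H (a # \<sigma>) = Pi_prot d m tau H' (a # \<sigma>)"
  shows "run_prob d m tau H (a # \<rho>) = run_prob d m tau H' (a # \<rho>)"
  unfolding run_prob_def length_Cons prod.lessThan_Suc_shift by (simp add: assms cong: if_cong)

lemma precompose_admissible:
  assumes g: "bij_betw g (deck m tau) (deck m tau)" and H0: "H 0 \<subseteq> deck m tau"
    and f: "f \<in> admissible_maps d m tau (permute_deal g H)"
  shows "(\<lambda>c. if c \<in> deck m tau then f (g c) else (\<lambda>_. 0)) \<in> admissible_maps d m tau H"
    (is "?f' \<in> _")
proof -
  have "bij_betw (f \<circ> g) (deck m tau) (vecs (Suc d))"
    using g f unfolding admissible_maps_def by (auto intro: bij_betw_trans)
  then have "bij_betw ?f' (deck m tau) (vecs (Suc d))"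
    by (rule bij_betw_cong[THEN iffD1, rotated]) simp
  moreover have "?f' ` H 0 = f ` permute_deal g H 0"
    using H0 unfolding permute_deal_def image_image by (intro image_cong) auto
  ultimately show ?thesis using f unfolding admissible_maps_def by auto
qed

lemma card_admissible_maps_permute_deal_le:
  assumes g: "bij_betw g (deck m tau) (deck m tau)" and H0: "H 0 \<subseteq> deck m tau"
  shows "card (admissible_maps d m tau (permute_deal g H) :: (nat \<Rightarrow> nat \<Rightarrow> 'f::{finite,field}) set)
       \<le> card (admissible_maps d m tau H :: (nat \<Rightarrow> nat \<Rightarrow> 'f) set)"
proof (rule card_inj_on_le)
  let ?pre = "\<lambda>f c. if c \<in> deck m tau then f (g c) else (\<lambda>_. 0 :: 'f)"
  show "?pre ` admissible_maps d m tau (permute_deal g H) \<subseteq> admissible_maps d m tau H"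
    using precompose_admissible[where H=H, OF g H0] by blast
  show "inj_on ?pre (admissible_maps d m tau (permute_deal g H))"
  proof (rule inj_onI)
    fix f1 f2 assume f1: "f1 \<in> admissible_maps d m tau (permute_deal g H)"
      and f2: "f2 \<in> admissible_maps d m tau (permute_deal g H)" and eq: "?pre f1 = ?pre f2"
    have on_deck: "f1 c = f2 c" if "c \<in> deck m tau" for c
    proof -
      have "inv_into (deck m tau) g c \<in> deck m tau"
        using g that by (meson bij_betwE bij_betw_inv_into)
      then show ?thesis
        using fun_cong[OF eq, of "inv_into (deck m tau) g c"] bij_betw_inv_into_right[OF g that]
        by simp
    qed
    show "f1 = f2"
    proof
      fix c show "f1 c = f2 c"
        using on_deck f1 f2 unfolding admissible_maps_def by (cases "c \<in> deck m tau") auto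
    qed
  qed
qed (rule finite_admissible_maps)

lemma card_admissible_maps_permute_deal:
  assumes g: "bij_betw g (deck m tau) (deck m tau)" and H: "is_deal m tau H"
  shows "card (admissible_maps d m tau (permute_deal g H) :: (nat \<Rightarrow> nat \<Rightarrow> 'f::{finite,field}) set)
       = card (admissible_maps d m tau H :: (nat \<Rightarrow> nat \<Rightarrow> 'f) set)"
proof (rule antisym)
  let ?g' = "inv_into (deck m tau) g"
  have g': "bij_betw ?g' (deck m tau) (deck m tau)" using g by (rule bij_betw_inv_into)
  have "permute_deal g H 0 \<subseteq> deck m tau"
    using hand_subset_deck[OF is_deal_permute_deal[OF g H]] .
  from card_admissible_maps_permute_deal_le[where H="permute_deal g H", OF g' this]
  show "card (admissible_maps d m tau H :: (nat \<Rightarrow> nat \<Rightarrow> 'f) set)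
      \<le> card (admissible_maps d m tau (permute_deal g H) :: (nat \<Rightarrow> nat \<Rightarrow> 'f) set)"
    using permute_deal_inv_into(1)[OF g hand_subset_deck[OF H]] by simp
qed (rule card_admissible_maps_permute_deal_le[where H=H, OF g hand_subset_deck[OF H]])

lemma admissible_maps_shear_conjugate:
  fixes f :: "nat \<Rightarrow> nat \<Rightarrow> 'f::field"
  assumes f: "bij_betw f (deck m tau) (vecs (Suc d))" and u: "u \<in> vecs d"
    and conj: "\<And>x. x \<in> deck m tau \<Longrightarrow> f (g x) = shear d u s (f x)"
    and H: "is_deal m tau H"
  shows "f \<in> admissible_maps d m tau (permute_deal g H) \<longleftrightarrow> f \<in> admissible_maps d m tau H"
    and "f \<in> admissible_maps d m tau H \<Longrightarrow> max_execution d m (permute_deal g H) f = max_execution d m H f"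
proof -
  let ?T = "shear d u s" and ?V = "vecs (Suc d) - f ` H 0"
  have image: "f ` permute_deal g H k = ?T ` f ` H k" for k
    unfolding permute_deal_def image_image using hand_subset_deck[OF H] conj
    by (intro image_cong) auto
  have f_hand: "f ` H k \<subseteq> vecs (Suc d)" for k
    using f hand_subset_deck[OF H] by (auto dest: bij_betwE)
  have complement: "vecs (Suc d) - f ` permute_deal g H 0 = ?T ` ?V"
  proof -
    have "?T ` ?V = ?T ` vecs (Suc d) - ?T ` f ` H 0"
      by (rule inj_on_image_set_diff[where C="vecs (Suc d)"])
         (use bij_betw_shear[of d u s] f_hand[of 0] in \<open>auto simp: bij_betw_def\<close>)
    then show ?thesis using bij_betw_shear[of d u s] image[of 0] unfolding bij_betw_def by simp
  qed
  show admissible: "f \<in> admissible_maps d m tau (permute_deal g H) \<longleftrightarrow> f \<in> admissible_maps d m tau H"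
    using transversal_shear_image_iff[OF u Diff_subset[of "vecs (Suc d)" "f ` H 0"], of s]
    by (simp add: admissible_maps_def complement)
  assume "f \<in> admissible_maps d m tau H"
  then have V: "transversal_hyperplane d ?V" unfolding admissible_maps_def by simp
  have projections: "proj_down d (?T ` ?V) ` ?T ` f ` H k = proj_down d ?V ` f ` H k"
    if "k \<in> {1..m}" for k
  proof -
    have "H k \<inter> H 0 = {}" using H that unfolding is_deal_def by auto
    then have "f ` H k \<inter> f ` H 0 = {}"
      using f hand_subset_deck[OF H] unfolding bij_betw_def by (metis image_empty inj_on_image_Int)
    then have "f ` H k \<subseteq> ?V" using f_hand by blast
    then show ?thesis
      unfolding image_image using proj_down_shear[OF u V] by (intro image_cong) auto
  qed
  show "max_execution d m (permute_deal g H) f = max_execution d m H f"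
    unfolding max_execution_def complement unfolding image
    by (intro arg_cong[where f="Cons (TMap f)"] map_cong refl arg_cong[where f=TSet] projections) auto
qed

lemma run_prob_shear_invariant:
  fixes f :: "nat \<Rightarrow> nat \<Rightarrow> 'f::{finite,field}"
  assumes f: "bij_betw f (deck m tau) (vecs (Suc d))"
    and c: "c \<in> deck m tau" and c': "c' \<in> deck m tau"
  shows "\<exists>g. bij_betw g (deck m tau) (deck m tau) \<and> g c = c' \<and>
     (\<forall>H\<in>deals m tau. run_prob d m tau (permute_deal g H) (TMap f # \<rho>) = run_prob d m tau H (TMap f # \<rho>))"
proof -
  let ?D = "deck m tau"
  obtain u s where u: "u \<in> vecs d" and shear_c: "shear d u s (f c) = f c'"
    using shear_transitive[of "f c" d "f c'"] f c c' by (auto dest: bij_betwE)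
  define g where "g x = (if x \<in> ?D then inv_into ?D f (shear d u s (f x)) else x)" for x
  have "bij_betw (inv_into ?D f \<circ> shear d u s \<circ> f) ?D ?D"
    using f bij_betw_shear bij_betw_inv_into by (blast intro: bij_betw_trans)
  then have g: "bij_betw g ?D ?D"
    by (rule bij_betw_cong[THEN iffD1, rotated]) (simp add: g_def)
  have conj: "f (g x) = shear d u s (f x)" if "x \<in> ?D" for x
  proof -
    have "shear d u s (f x) \<in> f ` ?D"
      using that f shear_vecs unfolding bij_betw_def by blast
    then show ?thesis unfolding g_def using that by (simp add: f_inv_into_f)
  qed
  have "g c = c'"
    using c c' shear_c f unfolding g_def bij_betw_def by simp
  moreover have "run_prob d m tau (permute_deal g H) (TMap f # \<rho>) = run_prob d m tau H (TMap f # \<rho>)"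
    if "H \<in> deals m tau" for H
  proof (rule run_prob_Cons_cong)
    have H: "is_deal m tau H" using that by (simp add: deals_def)
    note conjugate = admissible_maps_shear_conjugate[OF f u conj H]
    have inj: "inj_on TMap A" for A :: "(nat \<Rightarrow> nat \<Rightarrow> 'f) set" by (simp add: inj_on_def)
    show "card (Pi_prot d m tau (permute_deal g H) ([] :: 'f token list))
        = card (Pi_prot d m tau H ([] :: 'f token list))"
      unfolding Pi_prot_Nil using card_admissible_maps_permute_deal[OF g H]
      by (simp add: card_image[OF inj])
    show "TMap f \<in> Pi_prot d m tau (permute_deal g H) [] \<longleftrightarrow> TMap f \<in> Pi_prot d m tau H []"
      unfolding Pi_prot_Nil using conjugate(1) by auto
    show "Pi_prot d m tau (permute_deal g H) (TMap f # \<sigma>) = Pi_prot d m tau H (TMap f # \<sigma>)" for \<sigma>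
      unfolding Pi_prot_TMap using conjugate by auto
  qed
  ultimately show ?thesis using g by blast
qed

lemma run_prob_transitive_symmetry:
  fixes \<rho> :: "'f::{finite,field} token list"
  assumes exec: "is_execution d m tau H\<^sub>0 \<rho>"
    and c: "c \<in> deck m tau" and c': "c' \<in> deck m tau"
  shows "\<exists>g. bij_betw g (deck m tau) (deck m tau) \<and> g c = c' \<and>
     (\<forall>H\<in>deals m tau. run_prob d m tau (permute_deal g H) \<rho> = run_prob d m tau H \<rho>)"
proof (cases \<rho>)
  case Nil
  then show ?thesis
    using c c' by (intro exI[of _ "Transposition.transpose c c'"]) (simp add: run_prob_def)
next
  case (Cons a \<rho>')
  then have "a \<in> Pi_prot d m tau H\<^sub>0 []" using exec unfolding is_execution_def by force
  then obtain f where "a = TMap f" and "bij_betw f (deck m tau) (vecs (Suc d))"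
    unfolding Pi_prot_Nil admissible_maps_def by blast
  then show ?thesis using run_prob_shear_invariant c c' Cons by blast
qed

theorem mainTheorem13:
  fixes tau :: "nat \<Rightarrow> nat" and m d c P :: nat
    and \<rho> :: "'f::{finite,field} token list"
  assumes "m > 1" and "CARD('f) > m" and "d > 0"
    and "total m tau = CARD('f) ^ (d + 1)"
    and "tau 0 = CARD('f) ^ (d + 1) - CARD('f) ^ d"
    and "\<forall>k\<in>{1..m}. tau k > CARD('f) ^ (d - 1)"
    and "is_run d m tau \<rho>"
    and "c \<in> deck m tau" and "P \<le> m"
  shows "cond_prob d m tau (\<lambda>H. c \<in> H P) \<rho> = real (tau P) / real (total m tau)"
  \<comment> \<open>The numerical conditions on \<open>m\<close>, \<open>q\<close>, \<open>d\<close> and \<open>\<tau>\<close> make the protocol informative;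
    safety does not need them.\<close>
proof -
  obtain H\<^sub>0 where exec: "is_execution d m tau H\<^sub>0 \<rho>" using assms(7) unfolding is_run_def by blast
  let ?W = "\<lambda>H. run_prob d m tau H \<rho>"
  have count: "(\<Sum>H\<in>deals m tau. if c \<in> H P then ?W H else 0) * real (total m tau)
      = real (tau P) * (\<Sum>H\<in>deals m tau. ?W H)"
    by (rule weighted_hand_count[OF run_prob_transitive_symmetry[OF exec assms(8)] assms(8,9)])
  have H\<^sub>0: "H\<^sub>0 \<in> deals m tau" using exec unfolding is_execution_def deals_def by simp
  have "0 < ?W H\<^sub>0" using exec by (rule run_prob_pos)
  also have "\<dots> \<le> (\<Sum>H\<in>deals m tau. ?W H)"
    using H\<^sub>0 by (intro member_le_sum) (simp_all add: run_prob_nonneg finite_deals)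
  finally have "0 < (\<Sum>H\<in>deals m tau. ?W H)" .
  moreover have "0 < real (total m tau)" using assms(8) by (simp add: deck_def)
  moreover have "0 < card (deals m tau)" using H\<^sub>0 finite_deals card_gt_0_iff by blast
  ultimately show ?thesis
    using count unfolding cond_prob_def prob_event_def by (simp add: field_simps)
qed

end
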